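(* Let $n\neq 0$, $m\neq 2$ be nonnegative integers with $m+n\ge 3$, and let $\Omega\subsetneq\mathbb{R}^{n+m}\setminus\mathbb{R}^n$ be an open set. Then $\kappa_{m,n}(\Omega)=\kappa_{m,n}$ provided that one of the following holds: (a) there exist $x_0\in\mathbb{R}^n$ and $r>0$ such that $\Omega$ contains $B_r(x_0,0)\setminus\{y=0\}$; (b) there exists $R>0$ such that $\Omega$ contains the set $\{(x,y):|y|>R\}$.
   Context: Points of $\mathbb{R}^{n+m}=\mathbb{R}^n\times\mathbb{R}^m$ are written $(x,y)$, $x\in\mathbb{R}^n$, $y\in\mathbb{R}^m$; $\mathbb{R}^n$ denotes $\{y=0\}$; $N=n+m$, $2^*=\frac{2N}{N-2}$; $B_r(x_0,0)$ is the open ball of radius $r$ centered at $(x_0,0)$. For an open set $\Omega\subset\mathbb{R}^{n+m}\setminus\mathbb{R}^n$, $$\kappa_{m,n}(\Omega)=\inf\Big\{\int_\Omega\Big(|\nabla u|^2-\Big(\frac{m-2}{2}\Big)^2\frac{u^2}{|y|^2}\Big)dx\,dy : u\in C_0^\infty(\Omega),\ \int_\Omega|u|^{2^*}dx\,dy=1\Big\},$$ and $\kappa_{m,n}=\kappa_{m,n}(\mathbb{R}^{n+m}\setminus\mathbb{R}^n)$. *)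

theory Defs
  imports "HOL-Analysis.Analysis"
begin

coinductive smooth_fun :: "('a::euclidean_space \<Rightarrow> real) \<Rightarrow> bool" where
  "f differentiable_on UNIV \<Longrightarrow> (\<forall>v. smooth_fun (\<lambda>p. frechet_derivative f (at p) v))
     \<Longrightarrow> smooth_fun f"

definition C0inf :: "'a::euclidean_space set \<Rightarrow> ('a \<Rightarrow> real) set" where
  "C0inf \<Omega> = {u. smooth_fun u \<and> compact (closure {p. u p \<noteq> 0})
                  \<and> closure {p. u p \<noteq> 0} \<subseteq> \<Omega>}"

definition grad_sq :: "('a::euclidean_space \<Rightarrow> real) \<Rightarrow> 'a \<Rightarrow> real" where
  "grad_sq u p = (\<Sum>b\<in>Basis. (frechet_derivative u (at p) b)\<^sup>2)"

text \<open>Points (x,y) of R^(n+m), with n = CARD('n), m = CARD('m).\<close>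
definition crit_exp :: "nat \<Rightarrow> real" where
  "crit_exp N = 2 * real N / (real N - 2)"

definition kappa :: "((real^'n::finite) \<times> (real^'m::finite)) set \<Rightarrow> ereal" where
  "kappa \<Omega> = (let N = CARD('n) + CARD('m); m = real CARD('m) in
     Inf ((\<lambda>u. ereal (\<integral>p. grad_sq u p - ((m - 2) / 2)\<^sup>2 * (u p)\<^sup>2 / (norm (snd p))\<^sup>2 \<partial>lborel))
          ` {u \<in> C0inf \<Omega>. (\<integral>p. \<bar>u p\<bar> powr crit_exp N \<partial>lborel) = 1}))"

definition punctured_space :: "((real^'n::finite) \<times> (real^'m::finite)) set" where
  "punctured_space = {p. snd p \<noteq> 0}"

end

theory Submission
  imports Defs
begin

text \<open>The quotient defining \<open>\<kappa>\<^sub>m\<^sub>,\<^sub>n\<close> is invariant under the dilations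
  \<open>u \<mapsto> \<mu>\<^bsup>(N-2)/2\<^esup> u(\<mu>(p - c))\<close> with \<open>\<mu> > 0\<close> and centre \<open>c \<in> \<real>\<^sup>n \<times> {0}\<close>: the gradient
  term, the Hardy term (because \<open>|y|\<close> scales by \<open>\<mu>\<close> when \<open>c\<close> has no \<open>y\<close>-component) and the
  \<open>L\<^sup>2\<^sup>*\<close>-norm are all preserved. The support of a test function for the punctured space is a
  compact set away from \<open>{y = 0}\<close>; under (a) shrinking it towards \<open>(x\<^sub>0, 0)\<close>, under (b)
  blowing it up from the origin, moves it into \<open>\<Omega>\<close>. Hence \<open>\<kappa>\<^sub>m\<^sub>,\<^sub>n(\<Omega>) \<le> \<kappa>\<^sub>m\<^sub>,\<^sub>n\<close>, and the
  reverse inequality is monotonicity of \<open>\<kappa>\<close> in the domain.\<close>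

definition dilate :: "real \<Rightarrow> real \<Rightarrow> 'a::real_vector \<Rightarrow> ('a \<Rightarrow> real) \<Rightarrow> 'a \<Rightarrow> real" where
  "dilate k \<mu> c u = (\<lambda>p. k * u (\<mu> *\<^sub>R (p - c)))"

lemma smooth_funD:
  assumes "smooth_fun f"
  shows "f differentiable_on UNIV" "smooth_fun (\<lambda>p. frechet_derivative f (at p) v)"
  using assms by (auto elim: smooth_fun.cases)

lemma borel_measurable_smooth_fun:
  assumes "smooth_fun u"
  shows "u \<in> borel_measurable borel"
  using assms differentiable_imp_continuous_on smooth_funD(1)
  by (blast intro: borel_measurable_continuous_onI)

lemma borel_measurable_grad_sq:
  assumes "smooth_fun u"
  shows "grad_sq u \<in> borel_measurable borel"
proof -
  have [measurable]: "(\<lambda>p. frechet_derivative u (at p) b) \<in> borel_measurable borel" for b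
    using assms by (intro borel_measurable_smooth_fun smooth_funD(2))
  show ?thesis
    unfolding grad_sq_def by measurable
qed

lemma has_derivative_dilate:
  fixes u :: "'a::euclidean_space \<Rightarrow> real"
  assumes "u differentiable (at (\<mu> *\<^sub>R (p - c)))"
  shows "(dilate k \<mu> c u has_derivative
          (\<lambda>h. k * \<mu> * frechet_derivative u (at (\<mu> *\<^sub>R (p - c))) h)) (at p)"
proof -
  let ?D = "frechet_derivative u (at (\<mu> *\<^sub>R (p - c)))"
  have D: "(u has_derivative ?D) (at (\<mu> *\<^sub>R (p - c)))"
    using assms frechet_derivative_works by blast
  have "((\<lambda>p. \<mu> *\<^sub>R (p - c)) has_derivative (\<lambda>h. \<mu> *\<^sub>R h)) (at p)"
    by (auto intro!: derivative_eq_intros)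
  from diff_chain_at[OF this D]
  have "((\<lambda>p. u (\<mu> *\<^sub>R (p - c))) has_derivative (\<lambda>h. ?D (\<mu> *\<^sub>R h))) (at p)"
    by (simp add: o_def)
  then have "(dilate k \<mu> c u has_derivative (\<lambda>h. k * ?D (\<mu> *\<^sub>R h))) (at p)"
    unfolding dilate_def by (rule has_derivative_mult_right)
  moreover have "?D (\<mu> *\<^sub>R h) = \<mu> * ?D h" for h
    using linear_cmul[OF has_derivative_linear[OF D]] by simp
  ultimately show ?thesis
    by (simp add: mult.assoc)
qed

lemma frechet_derivative_dilate:
  fixes u :: "'a::euclidean_space \<Rightarrow> real"
  assumes "u differentiable_on UNIV"
  shows "frechet_derivative (dilate k \<mu> c u) (at p)
         = (\<lambda>h. k * \<mu> * frechet_derivative u (at (\<mu> *\<^sub>R (p - c))) h)"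
proof -
  have "u differentiable (at (\<mu> *\<^sub>R (p - c)))"
    using assms by (simp add: differentiable_on_def)
  then show ?thesis
    by (rule frechet_derivative_at[OF has_derivative_dilate, symmetric])
qed

lemma smooth_fun_dilate:
  fixes u :: "'a::euclidean_space \<Rightarrow> real"
  assumes "smooth_fun u"
  shows "smooth_fun (dilate k \<mu> c u)"
proof -
  define D where "D f \<longleftrightarrow> (\<exists>u k. smooth_fun u \<and> f = dilate k \<mu> c u)" for f :: "'a \<Rightarrow> real"
  have "smooth_fun f" if "D f" for f
    using that
  proof (coinduction arbitrary: f rule: smooth_fun.coinduct)
    case (smooth_fun f)
    then obtain u k where u: "smooth_fun u" and f: "f = dilate k \<mu> c u"
      unfolding D_def by blast
    have du: "u differentiable_on UNIV"
      using u by (rule smooth_funD)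
    have "f differentiable at p" for p
    proof -
      have "u differentiable (at (\<mu> *\<^sub>R (p - c)))"
        using du by (simp add: differentiable_on_def)
      from has_derivative_dilate[OF this] show ?thesis
        unfolding f differentiable_def by blast
    qed
    then have "f differentiable_on UNIV"
      by (simp add: differentiable_at_imp_differentiable_on)
    moreover have "(\<lambda>p. frechet_derivative f (at p) v)
                   = dilate (k * \<mu>) \<mu> c (\<lambda>q. frechet_derivative u (at q) v)" for v
      unfolding f frechet_derivative_dilate[OF du] by (simp add: dilate_def)
    then have "D (\<lambda>p. frechet_derivative f (at p) v)" for v
      unfolding D_def using smooth_funD(2)[OF u] by blast
    ultimately show ?case
      by blast
  qed
  then show ?thesis
    using assms unfolding D_def by blast
qed

lemma support_dilate:
  fixes u :: "'a::euclidean_space \<Rightarrow> real"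
  assumes "k \<noteq> 0" and "\<mu> > 0"
  shows "closure {p. dilate k \<mu> c u p \<noteq> 0} = (\<lambda>q. c + (1/\<mu>) *\<^sub>R q) ` closure {p. u p \<noteq> 0}"
proof -
  have support: "{p. dilate k \<mu> c u p \<noteq> 0} = (+) c ` (\<lambda>q. (1/\<mu>) *\<^sub>R q) ` {p. u p \<noteq> 0}"
    using assms by (force simp: dilate_def image_image)
  have "closure {p. dilate k \<mu> c u p \<noteq> 0} = (+) c ` closure ((\<lambda>q. (1/\<mu>) *\<^sub>R q) ` {p. u p \<noteq> 0})"
    unfolding support by (rule closure_translation)
  also have "\<dots> = (+) c ` (\<lambda>q. (1/\<mu>) *\<^sub>R q) ` closure {p. u p \<noteq> 0}"
    using assms by (subst closure_injective_linear_image) (auto simp: inj_on_def linear_scaleR)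
  finally show ?thesis
    by (simp add: image_image)
qed

lemma dilate_in_C0inf:
  fixes u :: "'a::euclidean_space \<Rightarrow> real"
  assumes "u \<in> C0inf T" and "k \<noteq> 0" and "\<mu> > 0"
    and "(\<lambda>q. c + (1/\<mu>) *\<^sub>R q) ` closure {p. u p \<noteq> 0} \<subseteq> S"
  shows "dilate k \<mu> c u \<in> C0inf S"
proof -
  have "compact (closure {p. u p \<noteq> 0})"
    using assms(1) unfolding C0inf_def by blast
  from compact_translation[OF compact_scaling[OF this, of "1/\<mu>"], of c]
  have "compact ((\<lambda>q. c + (1/\<mu>) *\<^sub>R q) ` closure {p. u p \<noteq> 0})"
    by (simp add: image_image)
  then show ?thesis
    using assms smooth_fun_dilate unfolding C0inf_def mem_Collect_eq support_dilate[OF assms(2,3)]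
    by blast
qed

lemma integral_lborel_dilation:
  fixes g :: "'a::euclidean_space \<Rightarrow> real"
  assumes [measurable]: "g \<in> borel_measurable borel" and "\<mu> > 0"
  shows "(\<integral>p. g (\<mu> *\<^sub>R (p - c)) \<partial>lborel) = (1/\<mu>)^DIM('a) * (\<integral>p. g p \<partial>lborel)"
proof -
  have "lborel = density (distr lborel borel (\<lambda>x. c + (1/\<mu>) *\<^sub>R x)) (\<lambda>_. \<bar>1/\<mu>\<bar>^DIM('a))"
    using assms by (intro lborel_affine) simp
  then have "(\<integral>p. g (\<mu> *\<^sub>R (p - c)) \<partial>lborel)
      = (\<integral>p. g (\<mu> *\<^sub>R (p - c)) \<partial>density (distr lborel borel (\<lambda>x. c + (1/\<mu>) *\<^sub>R x)) (\<lambda>_. \<bar>1/\<mu>\<bar>^DIM('a)))"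
    by (simp only: flip: \<open>lborel = _\<close>)
  also have "\<dots> = (\<integral>x. \<bar>1/\<mu>\<bar>^DIM('a) * g (\<mu> *\<^sub>R ((c + (1/\<mu>) *\<^sub>R x) - c)) \<partial>lborel)"
    by (subst integral_density) (auto simp: integral_distr)
  also have "\<dots> = (1/\<mu>)^DIM('a) * (\<integral>p. g p \<partial>lborel)"
    using assms by simp
  finally show ?thesis .
qed

lemma integral_powr_dilate:
  fixes u :: "'a::euclidean_space \<Rightarrow> real"
  assumes "u \<in> borel_measurable borel" and "\<mu> > 0"
  shows "(\<integral>p. \<bar>dilate k \<mu> c u p\<bar> powr e \<partial>lborel)
         = \<bar>k\<bar> powr e * (1/\<mu>)^DIM('a) * (\<integral>p. \<bar>u p\<bar> powr e \<partial>lborel)"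
proof -
  have "(\<integral>p. \<bar>dilate k \<mu> c u p\<bar> powr e \<partial>lborel)
      = (\<integral>p. \<bar>k\<bar> powr e * (\<lambda>q. \<bar>u q\<bar> powr e) (\<mu> *\<^sub>R (p - c)) \<partial>lborel)"
    by (simp add: dilate_def abs_mult powr_mult)
  also have "\<dots> = \<bar>k\<bar> powr e * ((1/\<mu>)^DIM('a) * (\<integral>p. \<bar>u p\<bar> powr e \<partial>lborel))"
    using assms by (simp add: integral_lborel_dilation[where g = "\<lambda>q. \<bar>u q\<bar> powr e"])
  finally show ?thesis
    by (simp add: mult.assoc)
qed

lemma integral_hardy_dilate:
  fixes u :: "'a::euclidean_space \<times> 'b::euclidean_space \<Rightarrow> real"
  assumes "smooth_fun u" and "\<mu> > 0" and "snd c = 0"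
  shows "(\<integral>p. grad_sq (dilate k \<mu> c u) p - C * (dilate k \<mu> c u p)\<^sup>2 / (norm (snd p))\<^sup>2 \<partial>lborel)
         = (k * \<mu>)\<^sup>2 * (1/\<mu>)^DIM('a \<times> 'b)
           * (\<integral>p. grad_sq u p - C * (u p)\<^sup>2 / (norm (snd p))\<^sup>2 \<partial>lborel)"
proof -
  let ?F = "\<lambda>q. grad_sq u q - C * (u q)\<^sup>2 / (norm (snd q))\<^sup>2"
  have [measurable]: "u \<in> borel_measurable borel" "grad_sq u \<in> borel_measurable borel"
    using assms(1) by (rule borel_measurable_smooth_fun borel_measurable_grad_sq)+
  have [measurable]: "(\<lambda>p. norm (snd p)) \<in> borel_measurable (borel :: ('a \<times> 'b) measure)"
    by (intro borel_measurable_continuous_onI continuous_intros)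
  have [measurable]: "?F \<in> borel_measurable borel"
    by (rule borel_measurable_diff borel_measurable_times borel_measurable_divide
        borel_measurable_power; measurable)+
  have "grad_sq (dilate k \<mu> c u) p = (k * \<mu>)\<^sup>2 * grad_sq u (\<mu> *\<^sub>R (p - c))" for p
    using smooth_funD(1)[OF assms(1)]
    by (simp add: grad_sq_def frechet_derivative_dilate sum_distrib_left power_mult_distrib)
  \<comment> \<open>the Hardy weight transforms correctly because \<open>snd (\<mu> *\<^sub>R (p - c)) = \<mu> *\<^sub>R snd p\<close>\<close>
  then have "grad_sq (dilate k \<mu> c u) p - C * (dilate k \<mu> c u p)\<^sup>2 / (norm (snd p))\<^sup>2
      = (k * \<mu>)\<^sup>2 * ?F (\<mu> *\<^sub>R (p - c))" for p
    using assms(2,3) by (simp add: dilate_def field_simps power_mult_distrib)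
  then have "(\<integral>p. grad_sq (dilate k \<mu> c u) p - C * (dilate k \<mu> c u p)\<^sup>2 / (norm (snd p))\<^sup>2 \<partial>lborel)
      = (k * \<mu>)\<^sup>2 * (\<integral>p. ?F (\<mu> *\<^sub>R (p - c)) \<partial>lborel)"
    by simp
  also have "\<dots> = (k * \<mu>)\<^sup>2 * ((1/\<mu>)^DIM('a \<times> 'b) * (\<integral>p. ?F p \<partial>lborel))"
    using assms(2) by (subst integral_lborel_dilation) auto
  finally show ?thesis
    by (simp add: mult.assoc)
qed

lemma critical_dilation_factors:
  fixes N :: nat
  assumes "N > 2" and "\<mu> > 0"
  shows "(\<mu> powr ((real N - 2) / 2)) powr crit_exp N * (1/\<mu>)^N = 1"
    and "(\<mu> powr ((real N - 2) / 2) * \<mu>)\<^sup>2 * (1/\<mu>)^N = 1"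
proof -
  have "(real N - 2) / 2 * crit_exp N = real N"
    using assms by (simp add: crit_exp_def field_simps)
  then have "(\<mu> powr ((real N - 2) / 2)) powr crit_exp N = \<mu> powr real N"
    by (simp add: powr_powr)
  then show "(\<mu> powr ((real N - 2) / 2)) powr crit_exp N * (1/\<mu>)^N = 1"
    using assms by (simp add: powr_realpow power_one_over)
  have "\<mu> powr ((real N - 2) / 2) * \<mu> = \<mu> powr ((real N - 2) / 2 + 1)"
    using assms by (simp add: powr_add)
  also have "\<dots> = \<mu> powr (real N / 2)"
    by (simp add: field_simps)
  finally have "(\<mu> powr ((real N - 2) / 2) * \<mu>)\<^sup>2 = \<mu> powr real N"
    using assms by (simp add: powr_power)
  then show "(\<mu> powr ((real N - 2) / 2) * \<mu>)\<^sup>2 * (1/\<mu>)^N = 1"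
    using assms by (simp add: powr_realpow power_one_over)
qed

lemma shrink_into_punctured_ball:
  fixes K :: "('a::real_normed_vector \<times> 'b::real_normed_vector) set"
  assumes "compact K" and "K \<subseteq> {p. snd p \<noteq> 0}" and "r > 0"
  shows "\<exists>\<mu>>0. (\<lambda>q. (x0, 0) + (1/\<mu>) *\<^sub>R q) ` K \<subseteq> ball (x0, 0) r - {p. snd p = 0}"
proof -
  obtain b where b: "b > 0" "\<forall>q\<in>K. norm q \<le> b"
    using compact_imp_bounded[OF assms(1)] bounded_pos by blast
  define \<mu> where "\<mu> = 2 * b / r"
  have \<mu>: "\<mu> > 0"
    using b assms(3) by (simp add: \<mu>_def)
  have "(x0, 0) + (1/\<mu>) *\<^sub>R q \<in> ball (x0, 0) r - {p. snd p = 0}" if "q \<in> K" for q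
  proof -
    have "dist (x0, 0) ((x0, 0) + (1/\<mu>) *\<^sub>R q) = norm q / \<mu>"
      using \<mu> by (simp add: dist_norm)
    also have "\<dots> \<le> b / \<mu>"
      using b that \<mu> by (simp add: divide_right_mono)
    also have "\<dots> < r"
      using b assms(3) by (simp add: \<mu>_def field_simps)
    finally show ?thesis
      using that assms(2) \<mu> by auto
  qed
  with \<mu> show ?thesis
    by blast
qed

lemma expand_into_far_region:
  fixes K :: "('a::real_normed_vector \<times> 'b::real_normed_vector) set"
  assumes "compact K" and "K \<subseteq> {p. snd p \<noteq> 0}"
  shows "\<exists>\<mu>>0. (\<lambda>q. (1/\<mu>) *\<^sub>R q) ` K \<subseteq> {p. norm (snd p) > R}"
proof -
  have "closed ((\<lambda>q. norm (snd q)) ` K)"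
    using assms(1) by (intro compact_imp_closed compact_continuous_image continuous_intros)
  moreover have "0 \<notin> (\<lambda>q. norm (snd q)) ` K"
    using assms(2) by auto
  ultimately have "\<exists>d>0. \<forall>y\<in>(\<lambda>q. norm (snd q)) ` K. d \<le> dist 0 y"
    by (rule separate_point_closed)
  then obtain d where d: "d > 0" "\<forall>y\<in>(\<lambda>q. norm (snd q)) ` K. d \<le> dist 0 y"
    by blast
  have dK: "d \<le> norm (snd q)" if "q \<in> K" for q
    using d(2) that by simp
  define \<mu> where "\<mu> = d / (\<bar>R\<bar> + 1)"
  have \<mu>: "\<mu> > 0"
    using d by (simp add: \<mu>_def)
  have "R < norm (snd ((1/\<mu>) *\<^sub>R q))" if "q \<in> K" for q
  proof -
    have "R < d / \<mu>"
      using d by (simp add: \<mu>_def)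
    also have "\<dots> \<le> norm (snd q) / \<mu>"
      using dK[OF that] \<mu> by (rule divide_right_mono[OF _ less_imp_le])
    also have "\<dots> = norm (snd ((1/\<mu>) *\<^sub>R q))"
      using \<mu> by simp
    finally show ?thesis .
  qed
  with \<mu> show ?thesis
    by (intro exI[of _ \<mu>]) auto
qed

lemma dilation_into_domain:
  fixes \<Omega> K :: "('a::real_normed_vector \<times> 'b::real_normed_vector) set"
  assumes "compact K" and "K \<subseteq> {p. snd p \<noteq> 0}"
    and "(\<exists>x0. \<exists>r>0. ball (x0, 0) r - {p. snd p = 0} \<subseteq> \<Omega>) \<or> (\<exists>R. {p. norm (snd p) > R} \<subseteq> \<Omega>)"
  shows "\<exists>\<mu>>0. \<exists>c. snd c = 0 \<and> (\<lambda>q. c + (1/\<mu>) *\<^sub>R q) ` K \<subseteq> \<Omega>"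
  using assms(3)
proof (elim disjE exE conjE)
  fix x0 r
  assume "r > 0" and "ball (x0, 0) r - {p. snd p = 0} \<subseteq> \<Omega>"
  moreover obtain \<mu> where "\<mu> > 0"
    and "(\<lambda>q. (x0, 0) + (1/\<mu>) *\<^sub>R q) ` K \<subseteq> ball (x0, 0) r - {p. snd p = 0}"
    using shrink_into_punctured_ball[OF assms(1,2) \<open>r > 0\<close>] by blast
  ultimately show ?thesis
    by (intro exI[of _ \<mu>] conjI exI[of _ "(x0, 0)"]) auto
next
  fix R
  assume "{p. norm (snd p) > R} \<subseteq> \<Omega>"
  moreover obtain \<mu> where "\<mu> > 0" and "(\<lambda>q. (1/\<mu>) *\<^sub>R q) ` K \<subseteq> {p. norm (snd p) > R}"
    using expand_into_far_region[OF assms(1,2)] by blast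
  ultimately show ?thesis
    by (intro exI[of _ \<mu>] conjI exI[of _ "0 :: 'a \<times> 'b"]) auto
qed

lemma kappa_antimono:
  assumes "S \<subseteq> T"
  shows "kappa T \<le> kappa S"
proof -
  have "C0inf S \<subseteq> C0inf T"
    using assms unfolding C0inf_def by blast
  then show ?thesis
    unfolding kappa_def Let_def by (intro Inf_superset_mono image_mono) blast
qed

lemma kappa_le_if_dilations_into:
  fixes S T :: "((real^'n::finite) \<times> (real^'m::finite)) set"
  assumes "CARD('n) + CARD('m) \<ge> 3"
    and "\<And>K. compact K \<Longrightarrow> K \<subseteq> T \<Longrightarrow>
           \<exists>\<mu>>0. \<exists>c. snd c = 0 \<and> (\<lambda>q. c + (1/\<mu>) *\<^sub>R q) ` K \<subseteq> S"
  shows "kappa S \<le> kappa T"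
proof -
  let ?N = "CARD('n) + CARD('m)"
  let ?C = "((real CARD('m) - 2) / 2)\<^sup>2"
  let ?E = "\<lambda>u. \<integral>p. grad_sq u p - ?C * (u p)\<^sup>2 / (norm (snd p))\<^sup>2 \<partial>lborel"
  let ?L = "\<lambda>u. \<integral>p. \<bar>u p\<bar> powr crit_exp ?N \<partial>lborel"
  have "\<exists>v\<in>{v \<in> C0inf S. ?L v = 1}. ereal (?E v) \<le> ereal (?E u)"
    if u: "u \<in> C0inf T" "?L u = 1" for u
  proof -
    have "compact (closure {p. u p \<noteq> 0})" "closure {p. u p \<noteq> 0} \<subseteq> T" "smooth_fun u"
      using u unfolding C0inf_def by auto
    then obtain \<mu> c where \<mu>: "\<mu> > 0" and c: "snd c = 0"
      and into: "(\<lambda>q. c + (1/\<mu>) *\<^sub>R q) ` closure {p. u p \<noteq> 0} \<subseteq> S"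
      using assms(2) by blast
    define k where "k = \<mu> powr ((real ?N - 2) / 2)"
    have k: "k > 0"
      using \<mu> by (simp add: k_def)
    have N: "?N > 2"
      using assms(1) by linarith
    have "dilate k \<mu> c u \<in> C0inf S"
      using dilate_in_C0inf[OF u(1) _ \<mu> into] k by simp
    moreover have "?L (dilate k \<mu> c u) = ?L u"
      using integral_powr_dilate[OF borel_measurable_smooth_fun[OF \<open>smooth_fun u\<close>] \<mu>]
        critical_dilation_factors(1)[OF N \<mu>] k
      by (simp add: k_def mult.assoc[symmetric])
    moreover have "?E (dilate k \<mu> c u) = ?E u"
      using integral_hardy_dilate[OF \<open>smooth_fun u\<close> \<mu> c] critical_dilation_factors(2)[OF N \<mu>]
      by (simp add: k_def)
    ultimately show ?thesis
      using u(2) by (intro bexI[of _ "dilate k \<mu> c u"]) auto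
  qed
  then show ?thesis
    unfolding kappa_def Let_def by (intro INF_mono) blast
qed

theorem theorem1p3:
  fixes \<Omega> :: "((real^'n) \<times> (real^'m)) set"
  assumes "CARD('m) \<noteq> 2" and "CARD('n) + CARD('m) \<ge> 3"
    and "open \<Omega>" and "\<Omega> \<subset> punctured_space"
    and "(\<exists>x0 :: real^'n. \<exists>r>0. ball (x0, 0) r - {p. snd p = 0} \<subseteq> \<Omega>)
         \<or> (\<exists>R>0. {p. norm (snd p) > R} \<subseteq> \<Omega>)"
  shows "kappa \<Omega> = kappa (punctured_space :: ((real^'n) \<times> (real^'m)) set)"
proof (rule antisym)
  have "\<exists>\<mu>>0. \<exists>c. snd c = 0 \<and> (\<lambda>q. c + (1/\<mu>) *\<^sub>R q) ` K \<subseteq> \<Omega>"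
    if "compact K" and "K \<subseteq> punctured_space" for K
    using that assms(5) by (intro dilation_into_domain) (auto simp: punctured_space_def)
  then show "kappa \<Omega> \<le> kappa (punctured_space :: ((real^'n) \<times> (real^'m)) set)"
    by (rule kappa_le_if_dilations_into[OF assms(2)])
  show "kappa (punctured_space :: ((real^'n) \<times> (real^'m)) set) \<le> kappa \<Omega>"
    using assms(4) by (intro kappa_antimono) blast
qed

end
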